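(* Let $(A,B)$, $(A',B')$ be primitive nondegenerate pairs of integral ternary quadratic forms such that $Q(A',B')\subset Q(A,B)$. Then there exist $\delta_1\in M_3(\mathbb{Z})$ and $\delta_2\in M_2(\mathbb{Z})$ with $(A',B')=(\delta_1,\delta_2^{-1})\cdot(A,B)$ and $|\det\delta_1|=|\det\delta_2|=(Q(A,B):Q(A',B'))$.
   Context: For $(\delta_1,\delta_2)\in \mathrm{GL}_3(\mathbb{Q})\times\mathrm{GL}_2(\mathbb{Q})$ with $\delta_2=\begin{pmatrix}p&q\\ r&s\end{pmatrix}$, the action on pairs of ternary quadratic forms is $(\delta_1,\delta_2)\cdot(A,B)=(p(\delta_1A)+q(\delta_1B),\,r(\delta_1A)+s(\delta_1B))$, $(\delta_1A)(v)=A(v\delta_1)$. A pair is nondegenerate if the discriminant of $4\det(u_1A-u_2B)$ is nonzero, and primitive if $\gcd\{\lambda^{ij}_{k\ell}\}=1$ where $\lambda^{ij}_{k\ell}=a_{ij}b_{k\ell}-b_{ij}a_{k\ell}$ ($a_{ij},b_{ij}$ the coefficients of $v_iv_j$, symmetrized). $Q(A,B)$ is Bhargava's quartic ring with basis $\{1,\alpha_1,\alpha_2,\alpha_3\}$ and multiplication $\alpha_i\alpha_j=\sum_k c_{ij}^k\alpha_k$, where for a permutation $(i,j,k)$ of $(1,2,3)$ with sign $\pm$: $c_{ii}^i=\pm\lambda^{ik}_{ij}+C_i$, $c_{ii}^j=\pm\lambda^{ii}_{ik}$, $c_{ij}^i=\pm\tfrac12\lambda^{ik}_{jj}+\tfrac12C_j$,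 $c_{ij}^k=\pm\lambda^{jj}_{ii}$, $C_1=\lambda^{23}_{11}$, $C_2=-\lambda^{13}_{22}$, $C_3=\lambda^{12}_{33}$, $c_{ij}^0=\sum_r(c_{jk}^rc_{ri}^k-c_{ij}^rc_{rk}^k)$ ($k\ne i$). The inclusion $Q(A',B')\subset Q(A,B)$ means $Q(A',B')$ is (isomorphic to) a subring of finite index of $Q(A,B)$. *)

theory Defs
  imports "Jordan_Normal_Form.Determinant" "HOL-Computational_Algebra.Polynomial"
begin

(* An integral ternary quadratic form A(v) = sum_{1<=i<=j<=3} a i j * v_i * v_j,
   represented by its coefficients a i j (only 1 <= i <= j <= 3 are used). *)
type_synonym tqf = "nat \<Rightarrow> nat \<Rightarrow> int"

definition symc :: "tqf \<Rightarrow> nat \<Rightarrow> nat \<Rightarrow> int" where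
  "symc a i j = (if i \<le> j then a i j else a j i)"

definition tqf_eval :: "tqf \<Rightarrow> (nat \<Rightarrow> rat) \<Rightarrow> rat" where
  "tqf_eval a v = (\<Sum>i\<in>{1..3}. \<Sum>j\<in>{i..3}. of_int (a i j) * v i * v j)"

definition lam :: "tqf \<Rightarrow> tqf \<Rightarrow> nat \<Rightarrow> nat \<Rightarrow> nat \<Rightarrow> nat \<Rightarrow> int" where
  "lam a b i j k l = symc a i j * symc b k l - symc b i j * symc a k l"

definition primitive_pair :: "tqf \<Rightarrow> tqf \<Rightarrow> bool" where
  "primitive_pair a b \<longleftrightarrow>
     Gcd {lam a b i j k l | i j k l. i \<in> {1..3} \<and> j \<in> {1..3} \<and> k \<in> {1..3} \<and> l \<in> {1..3}} = 1"

(* Gram matrix of A (half-integral symmetric matrix with A(v) = v G v^T), 0-indexed *)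
definition gram :: "tqf \<Rightarrow> rat mat" where
  "gram a = mat 3 3 (\<lambda>(i,j). if i = j then of_int (a (i+1) (i+1))
                              else of_int (symc a (i+1) (j+1)) / 2)"

(* 4 det(u1 A - u2 B) dehomogenized at u1 = t, u2 = 1; coefficient of t^k is the
   coefficient of u1^k u2^(3-k) of the binary cubic form *)
definition cubic_poly :: "tqf \<Rightarrow> tqf \<Rightarrow> rat poly" where
  "cubic_poly a b = smult 4 (det (mat 3 3 (\<lambda>(i,j). [:0, gram a $$ (i,j):] - [:gram b $$ (i,j):])))"

(* discriminant of the binary cubic form p3 x^3 + p2 x^2 y + p1 x y^2 + p0 y^3 *)
definition cubic_form_disc :: "rat poly \<Rightarrow> rat" where
  "cubic_form_disc p = (let a = coeff p 3; b = coeff p 2; c = coeff p 1; d = coeff p 0 in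
      b^2 * c^2 - 4 * a * c^3 - 4 * b^3 * d - 27 * a^2 * d^2 + 18 * a * b * c * d)"

definition nondegenerate_pair :: "tqf \<Rightarrow> tqf \<Rightarrow> bool" where
  "nondegenerate_pair a b \<longleftrightarrow> cubic_form_disc (cubic_poly a b) \<noteq> 0"

(* structure constants of Bhargava's quartic ring Q(A,B) *)
definition Cc :: "tqf \<Rightarrow> tqf \<Rightarrow> nat \<Rightarrow> rat" where
  "Cc a b i = of_int (if i = 1 then lam a b 2 3 1 1
                     else if i = 2 then - lam a b 1 3 2 2 else lam a b 1 2 3 3)"

definition nx :: "nat \<Rightarrow> nat" where "nx i = i mod 3 + 1"

(* c_ij^k for i,j,k in {1,2,3}; for i \<noteq> j the remaining index is 6-i-j and the sign
   of the permutation (i,j,6-i-j) is +1 iff j = nx i *)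
definition cnz :: "tqf \<Rightarrow> tqf \<Rightarrow> nat \<Rightarrow> nat \<Rightarrow> nat \<Rightarrow> rat" where
  "cnz a b i j k =
    (let L = (\<lambda>p q r s. of_int (lam a b p q r s) :: rat) in
     if i = j then
       (let j' = nx i; k' = nx j' in
        if k = i then L i k' i j' + Cc a b i
        else if k = j' then L i i i k'
        else - L i i i j')
     else
       (let k' = 6 - i - j; e = (if j = nx i then 1 else -1 :: rat) in
        if k = i then e / 2 * L i k' j j + Cc a b j / 2
        else if k = j then - e / 2 * L j k' i i + Cc a b i / 2
        else e * L j j i i))"

definition c0 :: "tqf \<Rightarrow> tqf \<Rightarrow> nat \<Rightarrow> nat \<Rightarrow> rat" where
  "c0 a b i j = (let k = nx i in
     \<Sum>r\<in>{1..3}. cnz a b j k r * cnz a b r i k - cnz a b i j r * cnz a b r k k)"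

(* full multiplication table on the basis alpha_0 = 1, alpha_1, alpha_2, alpha_3 *)
definition qc :: "tqf \<Rightarrow> tqf \<Rightarrow> nat \<Rightarrow> nat \<Rightarrow> nat \<Rightarrow> rat" where
  "qc a b i j k =
    (if i = 0 then (if j = k then 1 else 0)
     else if j = 0 then (if i = k then 1 else 0)
     else if k = 0 then c0 a b i j
     else cnz a b i j k)"

(* multiplication in Q(A,B) \<otimes> Q, elements as coordinate vectors (indices 0..3) *)
definition qmult :: "tqf \<Rightarrow> tqf \<Rightarrow> (nat \<Rightarrow> rat) \<Rightarrow> (nat \<Rightarrow> rat) \<Rightarrow> nat \<Rightarrow> rat" where
  "qmult a b x y = (\<lambda>k. \<Sum>i<4. \<Sum>j<4. x i * y j * qc a b i j k)"

definition basis4 :: "nat \<Rightarrow> nat \<Rightarrow> rat" where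
  "basis4 i = (\<lambda>k. if k = i then 1 else 0)"

(* Z-linear map Z^4 \<rightarrow> Z^4 given by an integer 4x4 matrix (columns = images of basis) *)
definition lin4 :: "int mat \<Rightarrow> (nat \<Rightarrow> rat) \<Rightarrow> nat \<Rightarrow> rat" where
  "lin4 M x = (\<lambda>k. \<Sum>i<4. of_int (M $$ (k,i)) * x i)"

(* M is an injective ring homomorphism Q(A',B') \<rightarrow> Q(A,B) with image of finite index,
   i.e. exhibits Q(A',B') as a subring of finite index (= |det M|) of Q(A,B) *)
definition quartic_subring_embedding :: "tqf \<Rightarrow> tqf \<Rightarrow> tqf \<Rightarrow> tqf \<Rightarrow> int mat \<Rightarrow> bool" where
  "quartic_subring_embedding a' b' a b M \<longleftrightarrow>
     M \<in> carrier_mat 4 4 \<and> det M \<noteq> 0 \<and>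
     (\<forall>k<4. lin4 M (basis4 0) k = basis4 0 k) \<and>
     (\<forall>i<4. \<forall>j<4. \<forall>k<4.
        lin4 M (qmult a' b' (basis4 i) (basis4 j)) k
          = qmult a b (lin4 M (basis4 i)) (lin4 M (basis4 j)) k)"

(* v \<delta>1, v a row vector indexed 1..3, \<delta>1 a 3x3 matrix (0-indexed in JNF) *)
definition vmul3 :: "(nat \<Rightarrow> rat) \<Rightarrow> int mat \<Rightarrow> nat \<Rightarrow> rat" where
  "vmul3 v d = (\<lambda>j. \<Sum>i\<in>{1..3}. v i * of_int (d $$ (i - 1, j - 1)))"

(* (\<delta>1, g) . (A,B) as a pair of quadratic functions, g = [[p,q],[r,s]] *)
definition pair_act :: "int mat \<Rightarrow> rat mat \<Rightarrow> tqf \<Rightarrow> tqf \<Rightarrow>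
    ((nat \<Rightarrow> rat) \<Rightarrow> rat) \<times> ((nat \<Rightarrow> rat) \<Rightarrow> rat)" where
  "pair_act d g a b =
    (\<lambda>v. g $$ (0,0) * tqf_eval a (vmul3 v d) + g $$ (0,1) * tqf_eval b (vmul3 v d),
     \<lambda>v. g $$ (1,0) * tqf_eval a (vmul3 v d) + g $$ (1,1) * tqf_eval b (vmul3 v d))"

definition inv_rat :: "int mat \<Rightarrow> rat mat" where
  "inv_rat D = smult_mat (1 / det (map_mat of_int D)) (adj_mat (map_mat of_int D))"

end

theory Submission
  imports Defs
begin

(* Write the embedding as alpha'_i = t_i + sum_k D_ki alpha_k (i = 1,2,3), where D is the lower
   right 3x3 block of M, so det M = det D.  Comparing the products alpha'_i alpha'_j in both rings
   and solving with the adjugate of D gives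
     det D * c'_ij^l = det D * (translation terms) + (c_ij^l of Q(A,B) in the basis D, times det D).
   Bhargava's invariants lambda are recovered from the structure constants by linear formulas that
   do not see translations, and applied to the rewritten constants these formulas produce the
   invariants of the substituted pair (A(v D^T), B(v D^T)).  Hence
     det D * lambda(A',B') = lambda(A(v D^T), B(v D^T)).
   The lambda's of (A(v D^T), B(v D^T)) satisfy Pluecker relations, which together with the
   primitivity of (A',B') force A(v D^T) and B(v D^T) to be integral combinations of A', B'; the
   2x2 matrix of these combinations has determinant det D and its inverse is delta_2. *)

lemma sum_1_3: "(\<Sum>x\<in>{1..3::nat}. f x) = f 1 + f 2 + f 3"
proof -
  have "{1..3::nat} = {1,2,3}" by auto
  then show ?thesis by (simp add: add.assoc)
qed

lemma sum_2_3: "(\<Sum>x\<in>{2..3::nat}. f x) = f 2 + f 3"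
proof -
  have "{2..3::nat} = {2,3}" by auto
  then show ?thesis by simp
qed

lemma sum_lessThan_4: "(\<Sum>x<4::nat. f x) = f 0 + f 1 + f 2 + f 3"
proof -
  have "{..<4::nat} = {0,1,2,3}" by auto
  then show ?thesis by (simp add: add.assoc)
qed

lemmas sum_Suc_0_3 [simp] = sum_1_3[unfolded One_nat_def]

lemma nx_simps [simp]: "nx (Suc 0) = 2" "nx 2 = 3" "nx 3 = 1"
  by (simp_all add: nx_def)

lemma det_mat_1: assumes "A \<in> carrier_mat 1 1" shows "det A = A $$ (0,0)"
proof -
  have empty: "mat_delete A 0 0 \<in> carrier_mat 0 0"
    using mat_delete_carrier[OF assms] by simp
  have "det A = (\<Sum>i<1. A $$ (i, 0) * cofactor A i 0)"
    by (rule laplace_expansion_column[OF assms]) simp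
  also have "\<dots> = A $$ (0,0)"
    using det_dim_zero[OF empty] by (simp add: cofactor_def lessThan_Suc)
  finally show ?thesis .
qed

lemma det_mat_2: assumes "A \<in> carrier_mat 2 2"
  shows "det A = A $$ (0,0) * A $$ (1,1) - A $$ (0,1) * A $$ (1,0)"
proof -
  have minors: "\<And>i j. mat_delete A i j \<in> carrier_mat 1 1"
    using mat_delete_carrier[OF assms] by simp
  have "det A = (\<Sum>i<2. A $$ (i, 0) * cofactor A i 0)"
    by (rule laplace_expansion_column[OF assms]) simp
  also have "\<dots> = A $$ (0,0) * A $$ (1,1) - A $$ (0,1) * A $$ (1,0)"
    unfolding cofactor_def det_mat_1[OF minors] using assms
    by (simp add: mat_delete_def lessThan_Suc numeral_2_eq_2)
  finally show ?thesis .
qed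

lemma det_mat_3: assumes "A \<in> carrier_mat 3 3"
  shows "det A =
      A $$ (0,0) * (A $$ (1,1) * A $$ (2,2) - A $$ (1,2) * A $$ (2,1))
    - A $$ (1,0) * (A $$ (0,1) * A $$ (2,2) - A $$ (0,2) * A $$ (2,1))
    + A $$ (2,0) * (A $$ (0,1) * A $$ (1,2) - A $$ (0,2) * A $$ (1,1))"
proof -
  have minors: "\<And>i j. mat_delete A i j \<in> carrier_mat 2 2"
    using mat_delete_carrier[OF assms] by simp
  have "det A = (\<Sum>i<3. A $$ (i, 0) * cofactor A i 0)"
    by (rule laplace_expansion_column[OF assms]) simp
  then show ?thesis
    unfolding cofactor_def det_mat_2[OF minors] using assms
    by (simp add: mat_delete_def lessThan_Suc eval_nat_numeral algebra_simps)
qed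

definition det3 :: "(nat \<Rightarrow> nat \<Rightarrow> 'a::comm_ring_1) \<Rightarrow> 'a" where
  "det3 d = d 1 1 * (d 2 2 * d 3 3 - d 2 3 * d 3 2) - d 2 1 * (d 1 2 * d 3 3 - d 1 3 * d 3 2)
          + d 3 1 * (d 1 2 * d 2 3 - d 1 3 * d 2 2)"

(* Arrays are indexed by 1..3; the adjugate entry (l,k) is the cyclic cofactor of (k,l). *)
definition adj3 :: "(nat \<Rightarrow> nat \<Rightarrow> 'a::comm_ring_1) \<Rightarrow> nat \<Rightarrow> nat \<Rightarrow> 'a" where
  "adj3 d l k = d (nx k) (nx l) * d (nx (nx k)) (nx (nx l)) - d (nx k) (nx (nx l)) * d (nx (nx k)) (nx l)"

lemma det_mat_3_array:
  assumes "A \<in> carrier_mat 3 3" and "\<And>i j. i < 3 \<Longrightarrow> j < 3 \<Longrightarrow> A $$ (i,j) = d (i+1) (j+1)"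
  shows "det A = det3 d"
  using assms by (simp add: det_mat_3 det3_def numeral_eq_Suc algebra_simps)

lemma det3_transpose: "det3 (\<lambda>i j. d j i) = det3 d"
  by (simp add: det3_def algebra_simps)

lemma adj3_mult:
  assumes "l \<in> {1,2,3}"
  shows "(\<Sum>k\<in>{1..3}. adj3 d l k * (\<Sum>m\<in>{1..3}. d k m * x m)) = det3 d * x l"
  using assms unfolding sum_1_3 adj3_def det3_def by (auto simp: algebra_simps)

lemma adj3_mult_column:
  assumes "l \<in> {1,2,3}" "j \<in> {1,2,3}"
  shows "(\<Sum>k\<in>{1..3}. adj3 d l k * d k j) = det3 d * of_bool (j = l)"
  using assms unfolding sum_1_3 adj3_def det3_def by (auto simp: algebra_simps)

lemma of_int_adj3: "of_int (adj3 d l k) = adj3 (\<lambda>i j. of_int (d i j)) l k"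
  and of_int_det3: "of_int (det3 d) = det3 (\<lambda>i j. of_int (d i j))"
  by (simp_all add: adj3_def det3_def)

lemma lam_commute_left: "lam a b j i k l = lam a b i j k l"
  and lam_commute_right: "lam a b i j l k = lam a b i j k l"
  and lam_antisym: "lam a b k l i j = - lam a b i j k l"
  and lam_diag: "lam a b i j i j = 0"
  by (simp_all add: lam_def symc_def)

lemma scaled_lam_swap:
  "(n * lam A B k l i j = lam X Y k l i j) \<longleftrightarrow> (n * lam A B i j k l = lam X Y i j k l)"
  by (simp add: lam_antisym[of _ _ k l])

(* The invariants are symmetric in each index pair and antisymmetric in the two pairs, so the 15
   entries (jj,ii), (ii,ik), (ii,ij), (ik,ij), (jk,ii) with (i,j,k) cyclic determine all 81. *)
lemma scaled_lam_from_representatives: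
  fixes n :: int
  assumes reps: "\<And>i j k. i \<in> {1,2,3} \<Longrightarrow> j = nx i \<Longrightarrow> k = nx j \<Longrightarrow>
     n * lam A B j j i i = lam X Y j j i i \<and> n * lam A B i i i k = lam X Y i i i k \<and>
     n * lam A B i i i j = lam X Y i i i j \<and> n * lam A B i k i j = lam X Y i k i j \<and>
     n * lam A B j k i i = lam X Y j k i i"
    and "i \<in> {1,2,3}" "j \<in> {1,2,3}" "k \<in> {1,2,3}" "l \<in> {1,2,3}"
  shows "n * lam A B i j k l = lam X Y i j k l"
proof -
  have "n * lam A B 2 2 1 1 = lam X Y 2 2 1 1 \<and> n * lam A B 1 1 1 3 = lam X Y 1 1 1 3 \<and>
    n * lam A B 1 1 1 2 = lam X Y 1 1 1 2 \<and> n * lam A B 1 3 1 2 = lam X Y 1 3 1 2 \<and>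
    n * lam A B 2 3 1 1 = lam X Y 2 3 1 1" by (rule reps) simp_all
  moreover have "n * lam A B 3 3 2 2 = lam X Y 3 3 2 2 \<and> n * lam A B 2 2 2 1 = lam X Y 2 2 2 1 \<and>
    n * lam A B 2 2 2 3 = lam X Y 2 2 2 3 \<and> n * lam A B 2 1 2 3 = lam X Y 2 1 2 3 \<and>
    n * lam A B 3 1 2 2 = lam X Y 3 1 2 2" by (rule reps) simp_all
  moreover have "n * lam A B 1 1 3 3 = lam X Y 1 1 3 3 \<and> n * lam A B 3 3 3 2 = lam X Y 3 3 3 2 \<and>
    n * lam A B 3 3 3 1 = lam X Y 3 3 3 1 \<and> n * lam A B 3 2 3 1 = lam X Y 3 2 3 1 \<and>
    n * lam A B 1 2 3 3 = lam X Y 1 2 3 3" by (rule reps) simp_all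
  ultimately show ?thesis
    using assms(2-) by (auto simp: lam_commute_left lam_commute_right scaled_lam_swap lam_diag)
qed

subsection \<open>Recovering the invariants from the structure constants\<close>

(* Bhargava's formulas for the c_ij^l, inverted: the 15 independent invariants as linear
   forms in the structure constants. *)
definition recovers_lam ::
    "(nat \<Rightarrow> nat \<Rightarrow> nat \<Rightarrow> rat) \<Rightarrow> (nat \<Rightarrow> nat \<Rightarrow> nat \<Rightarrow> nat \<Rightarrow> rat) \<Rightarrow> bool" where
  "recovers_lam c L \<longleftrightarrow> (\<forall>i\<in>{1,2,3}. let j = nx i; k = nx j in
     L j j i i = c i j k \<and> L i i i k = c i i j \<and> L i i i j = - c i i k \<and>
     L i k i j = c i i i - c j i j - c k i k \<and> L j k i i = c k i k - c j i j)"

lemma recovers_lam_cnz: "recovers_lam (cnz a b) (\<lambda>i j k l. of_int (lam a b i j k l))"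
  unfolding recovers_lam_def
  by (simp add: cnz_def Cc_def lam_def symc_def Let_def) (simp add: field_simps)

(* The basis change alpha_i -> alpha'_i = t_i + beta_i shifts c_ij^l by t_i [j = l] + t_j [i = l];
   the recovering formulas do not see such shifts. *)
lemma recovers_lam_translate:
  fixes n :: rat
  assumes "recovers_lam c L" and "recovers_lam c' L'"
    and shift: "\<And>i j l. i \<in> {1,2,3} \<Longrightarrow> j \<in> {1,2,3} \<Longrightarrow> l \<in> {1,2,3} \<Longrightarrow>
      n * c' i j l = n * (t i * of_bool (j = l) + t j * of_bool (i = l)) + c i j l"
    and "i \<in> {1,2,3}" "j = nx i" "k = nx j"
  shows "n * L' j j i i = L j j i i \<and> n * L' i i i k = L i i i k \<and>
     n * L' i i i j = L i i i j \<and> n * L' i k i j = L i k i j \<and> n * L' j k i i = L j k i i"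
proof -
  from assms(4-) consider "i = 1" "j = 2" "k = 3" | "i = 2" "j = 3" "k = 1" | "i = 3" "j = 1" "k = 2"
    by auto
  then show ?thesis
    using assms(1,2) unfolding recovers_lam_def
    by cases (simp_all add: shift right_diff_distrib)
qed

definition tqf_subst :: "(nat \<Rightarrow> nat \<Rightarrow> int) \<Rightarrow> tqf \<Rightarrow> tqf" where
  "tqf_subst d a i j = (if i = j then (\<Sum>m\<in>{1..3}. \<Sum>n\<in>{m..3}. a m n * d m i * d n i)
     else (\<Sum>m\<in>{1..3}. \<Sum>n\<in>{m..3}. a m n * (d m i * d n j + d m j * d n i)))"

(* Structure constants in the rational basis beta_i = sum_k d_ki alpha_k, multiplied by det d. *)
definition basis_change_consts ::
    "(nat \<Rightarrow> nat \<Rightarrow> int) \<Rightarrow> (nat \<Rightarrow> nat \<Rightarrow> nat \<Rightarrow> rat) \<Rightarrow> nat \<Rightarrow> nat \<Rightarrow> nat \<Rightarrow> rat" where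
  "basis_change_consts d c i j l = (\<Sum>k\<in>{1..3}. of_int (adj3 d l k) *
     (\<Sum>m\<in>{1..3}. \<Sum>n\<in>{1..3}. of_int (d m i * d n j) * c m n k))"

lemmas basis_change_defs = basis_change_consts_def adj3_def tqf_subst_def cnz_def Cc_def lam_def symc_def
  nx_def Let_def sum_1_3 sum_2_3

lemma recovers_lam_subst:
  "recovers_lam (basis_change_consts d (cnz a b))
     (\<lambda>i j k l. of_int (lam (tqf_subst d a) (tqf_subst d b) i j k l))"
proof -
  let ?c = "basis_change_consts d (cnz a b)"
    and ?L = "\<lambda>i j k l. of_int (lam (tqf_subst d a) (tqf_subst d b) i j k l)"
  have "?L 2 2 1 1 = ?c 1 2 3" "?L 1 1 1 3 = ?c 1 1 2" "?L 1 1 1 2 = - ?c 1 1 3"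
    "?L 1 3 1 2 = ?c 1 1 1 - ?c 2 1 2 - ?c 3 1 3" "?L 2 3 1 1 = ?c 3 1 3 - ?c 2 1 2"
    "?L 3 3 2 2 = ?c 2 3 1" "?L 2 2 2 1 = ?c 2 2 3" "?L 2 2 2 3 = - ?c 2 2 1"
    "?L 2 1 2 3 = ?c 2 2 2 - ?c 3 2 3 - ?c 1 2 1" "?L 3 1 2 2 = ?c 1 2 1 - ?c 3 2 3"
    "?L 1 1 3 3 = ?c 3 1 2" "?L 3 3 3 2 = ?c 3 3 1" "?L 3 3 3 1 = - ?c 3 3 2"
    "?L 3 2 3 1 = ?c 3 3 3 - ?c 1 3 1 - ?c 2 3 2" "?L 1 2 3 3 = ?c 2 3 2 - ?c 1 3 1"
    by (simp del: One_nat_def add: One_nat_def[symmetric] basis_change_defs, simp add: field_simps)+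
  then show ?thesis
    unfolding recovers_lam_def by (simp add: Let_def)
qed

subsection \<open>Structure constants of a subring of finite index\<close>

lemma lin4_basis4: "i < 4 \<Longrightarrow> lin4 M (basis4 i) k = of_int (M $$ (k,i))"
  by (simp add: lin4_def basis4_def if_distrib cong: if_cong)

lemma qmult_basis4:
  assumes "i < 4" "j < 4"
  shows "qmult a b (basis4 i) (basis4 j) k = qc a b i j k"
proof -
  have "i = 0 \<or> i = 1 \<or> i = 2 \<or> i = 3" "j = 0 \<or> j = 1 \<or> j = 2 \<or> j = 3"
    using assms by auto
  then show ?thesis unfolding qmult_def basis4_def sum_lessThan_4 by auto
qed

context
  fixes a' b' a b :: tqf and M :: "int mat"
  assumes emb: "quartic_subring_embedding a' b' a b M"
begin

lemma embedding_first_column: "k < 4 \<Longrightarrow> M $$ (k,0) = of_bool (k = 0)"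
proof -
  assume "k < 4"
  then have "lin4 M (basis4 0) k = basis4 0 k"
    using emb by (simp add: quartic_subring_embedding_def)
  then have "of_int (M $$ (k,0)) = basis4 0 k" by (simp add: lin4_basis4)
  then show ?thesis by (cases "k = 0") (simp_all add: basis4_def)
qed

lemma embedding_det: "det M = det3 (\<lambda>k l. M $$ (k,l))"
proof -
  have M: "M \<in> carrier_mat 4 4" using emb by (simp add: quartic_subring_embedding_def)
  have "det M = (\<Sum>i<4. M $$ (i, 0) * cofactor M i 0)"
    by (rule laplace_expansion_column[OF M]) simp
  also have "\<dots> = det (mat_delete M 0 0)"
    by (simp add: sum_lessThan_4 embedding_first_column cofactor_def)
  also have "\<dots> = det3 (\<lambda>k l. M $$ (k,l))"
    using M mat_delete_carrier[OF M] by (intro det_mat_3_array) (auto simp: mat_delete_def)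
  finally show ?thesis .
qed

(* The coordinates of alpha'_i alpha'_j, computed in Q(A',B') and in Q(A,B). *)
lemma embedding_mult:
  assumes "i \<in> {1,2,3}" "j \<in> {1,2,3}" "k \<in> {1,2,3}"
  shows "(\<Sum>l\<in>{1..3}. of_int (M $$ (k,l)) * cnz a' b' i j l) =
    of_int (M $$ (0,i)) * of_int (M $$ (k,j)) + of_int (M $$ (0,j)) * of_int (M $$ (k,i))
    + (\<Sum>m\<in>{1..3}. \<Sum>n\<in>{1..3}. of_int (M $$ (m,i) * M $$ (n,j)) * cnz a b m n k)"
proof -
  have hom: "lin4 M (qmult a' b' (basis4 i) (basis4 j)) k
      = qmult a b (lin4 M (basis4 i)) (lin4 M (basis4 j)) k"
    using emb assms unfolding quartic_subring_embedding_def by auto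
  have "lin4 M (qmult a' b' (basis4 i) (basis4 j)) k = (\<Sum>l\<in>{1..3}. of_int (M $$ (k,l)) * cnz a' b' i j l)"
    using assms by (auto simp: qmult_basis4 lin4_def sum_lessThan_4 sum_1_3 qc_def embedding_first_column)
  moreover have "lin4 M (basis4 i) = (\<lambda>m. of_int (M $$ (m,i)))"
    and "lin4 M (basis4 j) = (\<lambda>m. of_int (M $$ (m,j)))"
    using assms by (auto simp: lin4_basis4)
  moreover have "qmult a b (\<lambda>m. of_int (M $$ (m,i))) (\<lambda>m. of_int (M $$ (m,j))) k =
    of_int (M $$ (0,i)) * of_int (M $$ (k,j)) + of_int (M $$ (0,j)) * of_int (M $$ (k,i))
    + (\<Sum>m\<in>{1..3}. \<Sum>n\<in>{1..3}. of_int (M $$ (m,i) * M $$ (n,j)) * cnz a b m n k)"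
    using assms by (auto simp: qmult_def sum_lessThan_4 sum_1_3 qc_def algebra_simps)
  ultimately show ?thesis using hom by simp
qed

lemma embedding_structure_constants:
  assumes "i \<in> {1,2,3}" "j \<in> {1,2,3}" "l \<in> {1,2,3}"
  shows "of_int (det3 (\<lambda>k l. M $$ (k,l))) * cnz a' b' i j l =
    of_int (det3 (\<lambda>k l. M $$ (k,l))) *
      (of_int (M $$ (0,i)) * of_bool (j = l) + of_int (M $$ (0,j)) * of_bool (i = l))
    + basis_change_consts (\<lambda>k l. M $$ (k,l)) (cnz a b) i j l"
proof -
  define d :: "nat \<Rightarrow> nat \<Rightarrow> rat" where "d = (\<lambda>k l. of_int (M $$ (k,l)))"
  define t :: "nat \<Rightarrow> rat" where "t m = of_int (M $$ (0,m))" for m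
  define S where "S k = (\<Sum>m\<in>{1..3}. \<Sum>n\<in>{1..3}. of_int (M $$ (m,i) * M $$ (n,j)) * cnz a b m n k)" for k
  have "det3 d * cnz a' b' i j l = (\<Sum>k\<in>{1..3}. adj3 d l k * (\<Sum>m\<in>{1..3}. d k m * cnz a' b' i j m))"
    by (rule adj3_mult[symmetric, OF assms(3)])
  also have "\<dots> = (\<Sum>k\<in>{1..3}. adj3 d l k * (t i * d k j + t j * d k i + S k))"
  proof (rule sum.cong)
    fix k :: nat assume "k \<in> {1..3}"
    then have "k \<in> {1,2,3}" by auto
    then show "adj3 d l k * (\<Sum>m\<in>{1..3}. d k m * cnz a' b' i j m) =
        adj3 d l k * (t i * d k j + t j * d k i + S k)"
      using embedding_mult[OF assms(1,2)] by (simp add: d_def t_def S_def)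
  qed simp
  also have "\<dots> = t i * (\<Sum>k\<in>{1..3}. adj3 d l k * d k j) + t j * (\<Sum>k\<in>{1..3}. adj3 d l k * d k i)
      + (\<Sum>k\<in>{1..3}. adj3 d l k * S k)"
    by (simp add: sum_1_3 algebra_simps)
  also have "\<dots> = det3 d * (t i * of_bool (j = l) + t j * of_bool (i = l))
      + (\<Sum>k\<in>{1..3}. adj3 d l k * S k)"
    unfolding adj3_mult_column[OF assms(3,2)] adj3_mult_column[OF assms(3,1)] by (simp add: algebra_simps)
  finally show ?thesis
    by (simp add: d_def t_def S_def basis_change_consts_def of_int_adj3 of_int_det3)
qed

lemma embedding_scales_lam:
  assumes "i \<in> {1,2,3}" "j \<in> {1,2,3}" "k \<in> {1,2,3}" "l \<in> {1,2,3}"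
  shows "det3 (\<lambda>k l. M $$ (k,l)) * lam a' b' i j k l =
    lam (tqf_subst (\<lambda>k l. M $$ (k,l)) a) (tqf_subst (\<lambda>k l. M $$ (k,l)) b) i j k l"
proof (rule scaled_lam_from_representatives[OF _ assms], goal_cases)
  case (1 i j k)
  from recovers_lam_translate[OF recovers_lam_subst recovers_lam_cnz embedding_structure_constants 1]
  show ?case by (simp only: of_int_mult[symmetric] of_int_eq_iff)
qed

end

subsection \<open>Pairs with proportional invariants span the same pencil\<close>

lemma primitive_pair_lam_nonzero:
  assumes "primitive_pair A B"
  obtains i j k l where "i \<in> {1,2,3}" "j \<in> {1,2,3}" "k \<in> {1,2,3}" "l \<in> {1,2,3}" "lam A B i j k l \<noteq> 0"
proof -
  let ?L = "{lam A B i j k l | i j k l. i \<in> {1..3} \<and> j \<in> {1..3} \<and> k \<in> {1..3} \<and> l \<in> {1..3}}"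
  have "Gcd ?L = 1" using assms unfolding primitive_pair_def by simp
  then have "\<not> ?L \<subseteq> {0}" using Gcd_0_iff[of ?L] by simp
  then obtain i j k l where "i \<in> {1..3}" "j \<in> {1..3}" "k \<in> {1..3}" "l \<in> {1..3}" "lam A B i j k l \<noteq> 0"
    by blast
  moreover have "{1..3::nat} = {1,2,3}" by auto
  ultimately show ?thesis using that by blast
qed

lemma primitive_pair_dvd:
  fixes N P :: int
  assumes "primitive_pair A B"
    and dvd: "\<And>i j k l. i \<in> {1,2,3} \<Longrightarrow> j \<in> {1,2,3} \<Longrightarrow> k \<in> {1,2,3} \<Longrightarrow> l \<in> {1,2,3} \<Longrightarrow>
      N dvd P * lam A B i j k l"
  shows "N dvd P"
proof -
  let ?L = "{lam A B i j k l | i j k l. i \<in> {1..3} \<and> j \<in> {1..3} \<and> k \<in> {1..3} \<and> l \<in> {1..3}}"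
  have "{1..3::nat} = {1,2,3}" by auto
  then have "N dvd Gcd ((*) P ` ?L)"
    using dvd by (auto intro!: Gcd_greatest)
  also have "Gcd ((*) P ` ?L) = normalize P"
    using assms(1) by (simp add: Gcd_mult primitive_pair_def)
  finally show ?thesis by simp
qed

lemma cramer_2:
  fixes N P Q :: "'a::comm_ring"
  assumes "N * z1 = P * x1 + Q * y1" and "N * z2 = P * x2 + Q * y2"
  shows "N * (z1 * y2 - y1 * z2) = P * (x1 * y2 - y1 * x2)"
    and "N * (x1 * z2 - z1 * x2) = Q * (x1 * y2 - y1 * x2)"
proof -
  have "N * (z1 * y2 - y1 * z2) = (N * z1) * y2 - y1 * (N * z2)"
    and "N * (x1 * z2 - z1 * x2) = x1 * (N * z2) - (N * z1) * x2"
    by (simp_all add: algebra_simps)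
  then show "N * (z1 * y2 - y1 * z2) = P * (x1 * y2 - y1 * x2)"
    and "N * (x1 * z2 - z1 * x2) = Q * (x1 * y2 - y1 * x2)"
    unfolding assms by (simp_all add: algebra_simps)
qed

(* Solving the relations over Q gives N Z = P A + Q B; primitivity of (A,B) makes N divide P
   and Q. *)
lemma pluecker_imp_pencil:
  fixes A B Z :: tqf
  assumes prim: "primitive_pair A B"
    and u: "u1 \<in> {1,2,3}" "u2 \<in> {1,2,3}" and w: "w1 \<in> {1,2,3}" "w2 \<in> {1,2,3}"
    and nonzero: "lam A B u1 u2 w1 w2 \<noteq> 0"
    and pluecker: "\<And>z1 z2. z1 \<in> {1,2,3} \<Longrightarrow> z2 \<in> {1,2,3} \<Longrightarrow>
        symc Z u1 u2 * lam A B w1 w2 z1 z2 - symc Z w1 w2 * lam A B u1 u2 z1 z2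
        + symc Z z1 z2 * lam A B u1 u2 w1 w2 = 0"
  shows "\<exists>p q. \<forall>z1\<in>{1,2,3}. \<forall>z2\<in>{1,2,3}. symc Z z1 z2 = p * symc A z1 z2 + q * symc B z1 z2"
proof -
  define N where "N = lam A B u1 u2 w1 w2"
  define P where "P = lam Z B u1 u2 w1 w2"
  define Q where "Q = lam A Z u1 u2 w1 w2"
  have lin: "N * symc Z z1 z2 = P * symc A z1 z2 + Q * symc B z1 z2"
    if "z1 \<in> {1,2,3}" "z2 \<in> {1,2,3}" for z1 z2
    using pluecker[OF that] unfolding N_def P_def Q_def lam_def by (simp add: algebra_simps)
  have "N dvd P"
  proof (rule primitive_pair_dvd[OF prim])
    fix e1 e2 f1 f2 :: nat assume e: "e1 \<in> {1,2,3}" "e2 \<in> {1,2,3}" "f1 \<in> {1,2,3}" "f2 \<in> {1,2,3}"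
    have "N * lam Z B e1 e2 f1 f2 = P * lam A B e1 e2 f1 f2"
      unfolding lam_def by (rule cramer_2(1)[OF lin[OF e(1,2)] lin[OF e(3,4)]])
    then show "N dvd P * lam A B e1 e2 f1 f2" by (metis dvd_triv_left)
  qed
  moreover have "N dvd Q"
  proof (rule primitive_pair_dvd[OF prim])
    fix e1 e2 f1 f2 :: nat assume e: "e1 \<in> {1,2,3}" "e2 \<in> {1,2,3}" "f1 \<in> {1,2,3}" "f2 \<in> {1,2,3}"
    have "N * lam A Z e1 e2 f1 f2 = Q * lam A B e1 e2 f1 f2"
      unfolding lam_def by (rule cramer_2(2)[OF lin[OF e(1,2)] lin[OF e(3,4)]])
    then show "N dvd Q * lam A B e1 e2 f1 f2" by (metis dvd_triv_left)
  qed
  ultimately obtain p q where p: "P = N * p" and q: "Q = N * q" by (elim dvdE)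
  show ?thesis
  proof (intro exI ballI)
    fix z1 z2 :: nat assume z: "z1 \<in> {1,2,3}" "z2 \<in> {1,2,3}"
    have "N * symc Z z1 z2 = N * (p * symc A z1 z2 + q * symc B z1 z2)"
      using lin[OF z] unfolding p q by (simp add: algebra_simps)
    then show "symc Z z1 z2 = p * symc A z1 z2 + q * symc B z1 z2"
      using nonzero by (simp add: N_def)
  qed
qed

lemma scaled_lam_imp_pencil:
  fixes n :: int and A B X Y :: tqf
  assumes n: "n \<noteq> 0" and prim: "primitive_pair A B"
    and scaled: "\<And>i j k l. i \<in> {1,2,3} \<Longrightarrow> j \<in> {1,2,3} \<Longrightarrow> k \<in> {1,2,3} \<Longrightarrow> l \<in> {1,2,3} \<Longrightarrow>
                n * lam A B i j k l = lam X Y i j k l"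
  obtains p q r s where
    "\<forall>i\<in>{1,2,3}. \<forall>j\<in>{1,2,3}. symc X i j = p * symc A i j + q * symc B i j"
    "\<forall>i\<in>{1,2,3}. \<forall>j\<in>{1,2,3}. symc Y i j = r * symc A i j + s * symc B i j"
    "p * s - q * r = n"
proof -
  obtain u1 u2 w1 w2 where u: "u1 \<in> {1,2,3}" "u2 \<in> {1,2,3}" and w: "w1 \<in> {1,2,3}" "w2 \<in> {1,2,3}"
    and N: "lam A B u1 u2 w1 w2 \<noteq> 0"
    using primitive_pair_lam_nonzero[OF prim] by blast
  (* multiplied by n, the relation becomes the Laplace expansion of a determinant with a repeated row *)
  have pluecker: "symc Z u1 u2 * lam A B w1 w2 z1 z2 - symc Z w1 w2 * lam A B u1 u2 z1 z2
        + symc Z z1 z2 * lam A B u1 u2 w1 w2 = 0"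
    if "Z = X \<or> Z = Y" "z1 \<in> {1,2,3}" "z2 \<in> {1,2,3}" for Z z1 z2
  proof -
    have "n * (symc Z u1 u2 * lam A B w1 w2 z1 z2 - symc Z w1 w2 * lam A B u1 u2 z1 z2
        + symc Z z1 z2 * lam A B u1 u2 w1 w2) =
        symc Z u1 u2 * (n * lam A B w1 w2 z1 z2) - symc Z w1 w2 * (n * lam A B u1 u2 z1 z2)
        + symc Z z1 z2 * (n * lam A B u1 u2 w1 w2)"
      by (simp add: algebra_simps)
    also have "\<dots> = symc Z u1 u2 * lam X Y w1 w2 z1 z2 - symc Z w1 w2 * lam X Y u1 u2 z1 z2
        + symc Z z1 z2 * lam X Y u1 u2 w1 w2"
      using scaled[OF w that(2,3)] scaled[OF u that(2,3)] scaled[OF u w] by simp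
    also have "\<dots> = 0"
      using that(1) unfolding lam_def by (auto simp: algebra_simps)
    finally show ?thesis using n by simp
  qed
  obtain p q where X: "\<forall>i\<in>{1,2,3}. \<forall>j\<in>{1,2,3}. symc X i j = p * symc A i j + q * symc B i j"
    using pluecker_imp_pencil[OF prim u w N pluecker] by blast
  obtain r s where Y: "\<forall>i\<in>{1,2,3}. \<forall>j\<in>{1,2,3}. symc Y i j = r * symc A i j + s * symc B i j"
    using pluecker_imp_pencil[OF prim u w N pluecker] by blast
  have "n * lam A B u1 u2 w1 w2 = lam X Y u1 u2 w1 w2" using scaled u w .
  also have "\<dots> = (p * s - q * r) * lam A B u1 u2 w1 w2"
  proof -
    have "symc X u1 u2 = p * symc A u1 u2 + q * symc B u1 u2" "symc X w1 w2 = p * symc A w1 w2 + q * symc B w1 w2"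
      "symc Y u1 u2 = r * symc A u1 u2 + s * symc B u1 u2" "symc Y w1 w2 = r * symc A w1 w2 + s * symc B w1 w2"
      using X Y u w by blast+
    then show ?thesis unfolding lam_def by (simp add: algebra_simps)
  qed
  finally have "p * s - q * r = n" using N by simp
  with X Y that show ?thesis by blast
qed

lemma tqf_eval_subst:
  "tqf_eval a (vmul3 v (mat 3 3 (\<lambda>(i,j). d (j+1) (i+1)))) = tqf_eval (tqf_subst d a) v"
  unfolding tqf_eval_def vmul3_def tqf_subst_def sum_1_3 sum_2_3
  by (simp del: One_nat_def add: One_nat_def[symmetric]) (simp add: algebra_simps)

lemma tqf_eval_pencil:
  assumes "\<forall>i\<in>{1,2,3}. \<forall>j\<in>{1,2,3}. symc X i j = p * symc A i j + q * symc B i j"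
  shows "tqf_eval X v = of_int p * tqf_eval A v + of_int q * tqf_eval B v"
proof -
  have "X i j = p * A i j + q * B i j" if "i \<in> {1,2,3}" "j \<in> {1,2,3}" "i \<le> j" for i j
    using assms that by (auto simp: symc_def)
  then show ?thesis
    unfolding tqf_eval_def sum_1_3 sum_2_3 by (simp add: algebra_simps)
qed

lemma inverse_2x2_combination:
  fixes p q r s x y :: "'a::field"
  assumes n: "p * s - q * r \<noteq> 0"
  shows "s / (p * s - q * r) * (p * x + q * y) + - q / (p * s - q * r) * (r * x + s * y) = x"
    and "- r / (p * s - q * r) * (p * x + q * y) + p / (p * s - q * r) * (r * x + s * y) = y"
proof -
  let ?n = "p * s - q * r"
  have "s / ?n * (p * x + q * y) + - q / ?n * (r * x + s * y) = (s * (p * x + q * y) - q * (r * x + s * y)) / ?n"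
    by (simp add: diff_divide_distrib add_divide_distrib)
  also have "s * (p * x + q * y) - q * (r * x + s * y) = ?n * x" by (simp add: algebra_simps)
  finally show "s / ?n * (p * x + q * y) + - q / ?n * (r * x + s * y) = x" using n by simp
  have "- r / ?n * (p * x + q * y) + p / ?n * (r * x + s * y) = (p * (r * x + s * y) - r * (p * x + q * y)) / ?n"
    by (simp add: diff_divide_distrib add_divide_distrib)
  also have "p * (r * x + s * y) - r * (p * x + q * y) = ?n * y" by (simp add: algebra_simps)
  finally show "- r / ?n * (p * x + q * y) + p / ?n * (r * x + s * y) = y" using n by simp
qed

definition mat2 :: "int \<Rightarrow> int \<Rightarrow> int \<Rightarrow> int \<Rightarrow> int mat" where
  "mat2 p q r s = mat 2 2 (\<lambda>(i,j). if i = 0 then (if j = 0 then p else q) else (if j = 0 then r else s))"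

lemma det_mat2: "det (mat2 p q r s) = p * s - q * r"
  by (simp add: det_mat_2 mat2_def)

lemma pair_act_inv_mat2:
  assumes "p * s - q * r \<noteq> 0"
    and A: "\<And>v. tqf_eval a (vmul3 v d) = of_int p * A' v + of_int q * B' v"
    and B: "\<And>v. tqf_eval b (vmul3 v d) = of_int r * A' v + of_int s * B' v"
  shows "pair_act d (inv_rat (mat2 p q r s)) a b = (A', B')"
proof -
  let ?D = "map_mat rat_of_int (mat2 p q r s)"
  have D: "?D \<in> carrier_mat 2 2" by (simp add: mat2_def)
  have minors: "\<And>i j. mat_delete ?D i j \<in> carrier_mat 1 1"
    using mat_delete_carrier[OF D] by simp
  have det_D: "det ?D = of_int (p * s - q * r)" unfolding det_mat_2[OF D] by (simp add: mat2_def)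
  have inv: "inv_rat (mat2 p q r s) $$ (0,0) = of_int s / of_int (p * s - q * r)"
    "inv_rat (mat2 p q r s) $$ (0,1) = - of_int q / of_int (p * s - q * r)"
    "inv_rat (mat2 p q r s) $$ (1,0) = - of_int r / of_int (p * s - q * r)"
    "inv_rat (mat2 p q r s) $$ (1,1) = of_int p / of_int (p * s - q * r)"
    unfolding inv_rat_def det_D using D
    by (simp_all add: adj_mat_def cofactor_def det_mat_1[OF minors], simp_all add: mat_delete_def mat2_def)
  have nz: "rat_of_int p * of_int s - of_int q * of_int r \<noteq> 0"
    using assms(1) by (simp flip: of_int_mult)
  show ?thesis
    unfolding pair_act_def A B inv of_int_diff of_int_mult inverse_2x2_combination[OF nz] by simp
qed

lemma pair_act_of_pencil:
  assumes "p * s - q * r \<noteq> 0"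
    and "\<forall>i\<in>{1,2,3}. \<forall>j\<in>{1,2,3}. symc (tqf_subst d a) i j = p * symc a' i j + q * symc b' i j"
    and "\<forall>i\<in>{1,2,3}. \<forall>j\<in>{1,2,3}. symc (tqf_subst d b) i j = r * symc a' i j + s * symc b' i j"
  shows "pair_act (mat 3 3 (\<lambda>(i,j). d (j+1) (i+1))) (inv_rat (mat2 p q r s)) a b = (tqf_eval a', tqf_eval b')"
  by (rule pair_act_inv_mat2[OF assms(1)];
      unfold tqf_eval_subst; rule tqf_eval_pencil[OF assms(2)] tqf_eval_pencil[OF assms(3)])

theorem proposition5p6:
  fixes a b a' b' :: tqf and M :: "int mat"
  assumes "primitive_pair a b" and "nondegenerate_pair a b"
    and "primitive_pair a' b'" and "nondegenerate_pair a' b'"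
    and "quartic_subring_embedding a' b' a b M"
  shows "\<exists>d1 d2 :: int mat. d1 \<in> carrier_mat 3 3 \<and> d2 \<in> carrier_mat 2 2 \<and>
           (tqf_eval a', tqf_eval b') = pair_act d1 (inv_rat d2) a b \<and>
           \<bar>det d1\<bar> = \<bar>det M\<bar> \<and> \<bar>det d2\<bar> = \<bar>det M\<bar>"
proof -
  \<comment> \<open>Only the primitivity of \<open>(a', b')\<close> is needed.\<close>
  define D where "D = (\<lambda>k l. M $$ (k,l))"
  define d1 where "d1 = mat 3 3 (\<lambda>(i,j). D (j+1) (i+1))"
  have det_M: "det M = det3 D"
    unfolding D_def using embedding_det[OF assms(5)] .
  then have "det3 D \<noteq> 0"
    using assms(5) by (simp add: quartic_subring_embedding_def)
  then obtain p q r s where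
      X: "\<forall>i\<in>{1,2,3}. \<forall>j\<in>{1,2,3}. symc (tqf_subst D a) i j = p * symc a' i j + q * symc b' i j"
    and Y: "\<forall>i\<in>{1,2,3}. \<forall>j\<in>{1,2,3}. symc (tqf_subst D b) i j = r * symc a' i j + s * symc b' i j"
    and n: "p * s - q * r = det3 D"
    using scaled_lam_imp_pencil[OF _ assms(3) embedding_scales_lam[OF assms(5)]]
    unfolding D_def by blast
  have act: "pair_act d1 (inv_rat (mat2 p q r s)) a b = (tqf_eval a', tqf_eval b')"
    unfolding d1_def using n \<open>det3 D \<noteq> 0\<close> by (intro pair_act_of_pencil X Y) simp
  have "det d1 = det M"
    unfolding det_M d1_def det3_transpose[of D, symmetric] by (rule det_mat_3_array) simp_all
  moreover have "det (mat2 p q r s) = det M"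
    unfolding det_mat2 n det_M ..
  moreover have "d1 \<in> carrier_mat 3 3" "mat2 p q r s \<in> carrier_mat 2 2"
    by (simp_all add: d1_def mat2_def)
  ultimately show ?thesis
    using act by (intro exI[of _ d1] exI[of _ "mat2 p q r s"]) simp
qed

end
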